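(* Let $K\ge1$, let $\mathbf{\Phi}\in\mathbb{R}^{m\times n}$ satisfy the RIP with $\delta_{K+1}<\frac{1}{\sqrt K+1}$, let $\mathbf{x}\in\mathbb{R}^n$ with $|\mathrm{supp}(\mathbf{x})|=K$, $\mathbf{v}\in\mathbb{R}^m$, $\mathbf{y}=\mathbf{\Phi}\mathbf{x}+\mathbf{v}$. If $$\sqrt{\mathrm{SNR}} > \frac{(\sqrt K+1)(1+\delta_{K+1})}{1-(\sqrt K+1)\delta_{K+1}},$$ then every index $t\in\arg\max_{i\in\Omega}|\langle\phi_i,\mathbf{y}\rangle|$ belongs to $\mathrm{supp}(\mathbf{x})$; i.e., the first iteration of OMP selects a correct index.
   Context: $\Omega=\{1,\dots,n\}$; $\phi_i$ is the $i$-th column of $\mathbf{\Phi}$. RIP: for an integer $s\ge1$, the isometry constant $\delta_s$ of $\mathbf{\Phi}$ is the smallest $c\in[0,1)$ such that $(1-c)\|\mathbf{z}\|_2^2 \le \|\mathbf{\Phi}\mathbf{z}\|_2^2 \le (1+c)\|\mathbf{z}\|_2^2$ for all $s$-sparse $\mathbf{z}$. $\mathrm{SNR} := \|\mathbf{\Phi}\mathbf{x}\|_2^2/\|\mathbf{v}\|_2^2$ ($+\infty$ if $\mathbf{v}=\mathbf{0}$). *)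

theory Defs
  imports "HOL-Analysis.Analysis"
begin

definition supp :: "real^'n \<Rightarrow> 'n set" where
  "supp z = {i. z $ i \<noteq> 0}"

definition sparse :: "nat \<Rightarrow> real^'n \<Rightarrow> bool" where
  "sparse s z \<longleftrightarrow> card (supp z) \<le> s"

definition rip_bounds :: "real^'n^'m \<Rightarrow> nat \<Rightarrow> real set" where
  "rip_bounds A s = {c. 0 \<le> c \<and> c < 1 \<and>
     (\<forall>z. sparse s z \<longrightarrow>
        (1 - c) * (norm z)\<^sup>2 \<le> (norm (A *v z))\<^sup>2 \<and> (norm (A *v z))\<^sup>2 \<le> (1 + c) * (norm z)\<^sup>2)}"

definition has_rip :: "real^'n^'m \<Rightarrow> nat \<Rightarrow> bool" where
  "has_rip A s \<longleftrightarrow> rip_bounds A s \<noteq> {}"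

text \<open>The isometry constant delta_s: the smallest admissible c (the set is closed from below).\<close>
definition rip_const :: "real^'n^'m \<Rightarrow> nat \<Rightarrow> real" where
  "rip_const A s = Inf (rip_bounds A s)"

end

theory Submission
  imports Defs
begin

(* Suppose the selected index t lies outside supp x. The RIP of order K+1 bounds the correlation
of the column phi_t with y = Phi x + v by delta r + sqrt(1+delta) e, where r = norm x and e = norm v:
since e_t is orthogonal to x, polarization turns the RIP into a near-orthogonality of
Phi x and phi_t. On the other hand, expanding Phi x over the columns in supp x and using Cauchy-Schwarz
on the K coefficients, the maximality of t gives
a^2 - a e <= <Phi x, y> <= sqrt K r |<phi_t, y>|, where a = norm (Phi x). Combining this with the
lower RIP bound (1 - delta) r^2 <= a^2 yields a (1 - (sqrt K + 1) delta) <= e (sqrt K + 1)(1 + delta),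
which is exactly what the SNR hypothesis excludes. *)

lemma rip_const_nonneg:
  assumes "has_rip A s"
  shows "0 \<le> rip_const A s"
  using assms unfolding rip_const_def has_rip_def
  by (intro cInf_greatest) (auto simp: rip_bounds_def)

lemma rip_const_less_one:
  assumes "has_rip A s"
  shows "rip_const A s < 1"
proof -
  obtain c where c: "c \<in> rip_bounds A s"
    using assms by (auto simp: has_rip_def)
  have "bdd_below (rip_bounds A s)"
    by (rule bdd_belowI[of _ 0]) (auto simp: rip_bounds_def)
  then have "rip_const A s \<le> c"
    unfolding rip_const_def using c by (rule cInf_lower[rotated])
  with c show ?thesis
    by (auto simp: rip_bounds_def)
qed

lemma rip_const_bounds:
  assumes "has_rip A s" and "sparse s z"
  shows rip_const_lower: "(1 - rip_const A s) * (norm z)\<^sup>2 \<le> (norm (A *v z))\<^sup>2"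
    and rip_const_upper: "(norm (A *v z))\<^sup>2 \<le> (1 + rip_const A s) * (norm z)\<^sup>2"
proof -
  have ne: "rip_bounds A s \<noteq> {}"
    using assms(1) by (simp add: has_rip_def)
  have bounds: "(1 - c) * (norm z)\<^sup>2 \<le> (norm (A *v z))\<^sup>2 \<and> (norm (A *v z))\<^sup>2 \<le> (1 + c) * (norm z)\<^sup>2"
    if "c \<in> rip_bounds A s" for c
    using that assms(2) by (auto simp: rip_bounds_def)
  have "(1 - rip_const A s) * (norm z)\<^sup>2 \<le> (norm (A *v z))\<^sup>2 \<and>
      (norm (A *v z))\<^sup>2 \<le> (1 + rip_const A s) * (norm z)\<^sup>2"
  proof (cases "z = 0")
    case False
    then have pos: "(norm z)\<^sup>2 > 0"
      by simp
    have "1 - (norm (A *v z))\<^sup>2 / (norm z)\<^sup>2 \<le> rip_const A s"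
      unfolding rip_const_def
      by (rule cInf_greatest[OF ne]) (use bounds pos in \<open>auto simp: field_simps\<close>)
    moreover have "(norm (A *v z))\<^sup>2 / (norm z)\<^sup>2 - 1 \<le> rip_const A s"
      unfolding rip_const_def
      by (rule cInf_greatest[OF ne]) (use bounds pos in \<open>auto simp: field_simps\<close>)
    ultimately show ?thesis
      using pos by (simp add: field_simps)
  qed (use rip_const_nonneg[OF assms(1)] in simp)
  then show "(1 - rip_const A s) * (norm z)\<^sup>2 \<le> (norm (A *v z))\<^sup>2"
    and "(norm (A *v z))\<^sup>2 \<le> (1 + rip_const A s) * (norm z)\<^sup>2"
    by auto
qed

lemma sparse_add_axis:
  fixes x :: "real^'n"
  assumes "sparse s x"
  shows "sparse (Suc s) (x + c *\<^sub>R axis j 1)"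
proof -
  have "supp (x + c *\<^sub>R axis j 1) \<subseteq> insert j (supp x)"
    by (auto simp: supp_def axis_def)
  then have "card (supp (x + c *\<^sub>R axis j 1)) \<le> card (insert j (supp x))"
    by (intro card_mono) auto
  also have "\<dots> \<le> Suc (card (supp x))"
    by (simp add: card_insert_if)
  finally show ?thesis
    using assms by (simp add: sparse_def)
qed

lemma norm_column_le_rip:
  fixes A :: "real^'n^'m"
  assumes "has_rip A s" and "1 \<le> s"
  shows "norm (column j A) \<le> sqrt (1 + rip_const A s)"
proof -
  have "supp (axis j (1::real)) = {j}"
    by (auto simp: supp_def axis_def)
  then have "sparse s (axis j (1::real))"
    using assms(2) by (simp add: sparse_def)
  from rip_const_upper[OF assms(1) this] show ?thesis
    by (simp add: matrix_vector_mult_basis real_le_rsqrt)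
qed

lemma norm_add_diff_polarization:
  fixes p q :: "'a::real_inner"
  shows "(norm (p + q))\<^sup>2 - (norm (p - q))\<^sup>2 = 4 * (p \<bullet> q)"
  by (simp add: power2_norm_eq_inner inner_add_left inner_add_right inner_diff_left
      inner_diff_right inner_commute)

lemma rip_inner_orthogonal:
  fixes A :: "real^'n^'m"
  assumes rip: "has_rip A s" and "sparse s (u + w)" and "sparse s (u - w)"
    and orth: "u \<bullet> w = 0" and eq: "norm u = norm w"
  shows "\<bar>(A *v u) \<bullet> (A *v w)\<bar> \<le> rip_const A s * (norm u)\<^sup>2"
proof -
  have "w \<bullet> w = u \<bullet> u"
    using eq by (metis power2_norm_eq_inner)
  then have "(norm (u + w))\<^sup>2 = 2 * (norm u)\<^sup>2" "(norm (u - w))\<^sup>2 = 2 * (norm u)\<^sup>2"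
    using orth by (simp_all add: power2_norm_eq_inner inner_add_left inner_add_right
        inner_diff_left inner_diff_right inner_commute)
  moreover have "4 * ((A *v u) \<bullet> (A *v w)) = (norm (A *v (u + w)))\<^sup>2 - (norm (A *v (u - w)))\<^sup>2"
    by (simp add: norm_add_diff_polarization matrix_vector_right_distrib
        matrix_vector_mult_diff_distrib)
  ultimately show ?thesis
    using rip_const_bounds[OF rip assms(2)] rip_const_bounds[OF rip assms(3)]
    by (auto simp: abs_if power2_eq_square algebra_simps)
qed

lemma rip_inner_column_outside_support:
  fixes A :: "real^'n^'m"
  assumes rip: "has_rip A (Suc s)" and "sparse s x" and "x $ j = 0"
  shows "\<bar>column j A \<bullet> (A *v x)\<bar> \<le> rip_const A (Suc s) * norm x"
proof (cases "x = 0")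
  case False
  define w where "w = norm x *\<^sub>R axis j (1::real)"
  have "sparse (Suc s) (x + w)" "sparse (Suc s) (x - w)"
    using sparse_add_axis[OF assms(2), of "norm x" j] sparse_add_axis[OF assms(2), of "- norm x" j]
    by (simp_all add: w_def)
  moreover have "x \<bullet> w = 0" "norm x = norm w"
    using assms(3) by (simp_all add: w_def inner_axis)
  ultimately have "\<bar>(A *v x) \<bullet> (A *v w)\<bar> \<le> rip_const A (Suc s) * (norm x)\<^sup>2"
    by (rule rip_inner_orthogonal[OF rip])
  moreover have "A *v w = norm x *\<^sub>R column j A"
    by (simp add: w_def matrix_vector_mult_scaleR matrix_vector_mult_basis)
  ultimately have "norm x * \<bar>column j A \<bullet> (A *v x)\<bar> \<le> norm x * (rip_const A (Suc s) * norm x)"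
    by (simp add: inner_commute power2_eq_square abs_mult mult_ac)
  then show ?thesis
    using False by simp
qed simp

lemma inner_matrix_vector_mult_supp:
  fixes A :: "real^'n^'m"
  shows "(A *v x) \<bullet> y = (\<Sum>i\<in>supp x. x $ i * (column i A \<bullet> y))"
proof -
  have "(A *v x) \<bullet> y = (\<Sum>i\<in>UNIV. x $ i * (column i A \<bullet> y))"
    by (simp add: matrix_mult_sum scalar_mult_eq_scaleR inner_sum_left)
  also have "\<dots> = (\<Sum>i\<in>supp x. x $ i * (column i A \<bullet> y))"
    by (rule sum.mono_neutral_right) (auto simp: supp_def)
  finally show ?thesis .
qed

lemma sum_supp_abs_le:
  fixes x :: "real^'n"
  shows "(\<Sum>i\<in>supp x. \<bar>x $ i\<bar>) \<le> sqrt (real (card (supp x))) * norm x"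
proof -
  have "(\<Sum>i\<in>supp x. \<bar>x $ i\<bar>\<^sup>2) = (\<Sum>i\<in>UNIV. (x $ i)\<^sup>2)"
    unfolding power2_abs by (rule sum.mono_neutral_left) (auto simp: supp_def)
  also have "\<dots> = (norm x)\<^sup>2"
    by (simp add: norm_vec_def L2_set_def sum_nonneg)
  finally have "(\<Sum>i\<in>supp x. \<bar>x $ i\<bar>)\<^sup>2 \<le> (sqrt (real (card (supp x))) * norm x)\<^sup>2"
    using Cauchy_Schwarz_ineq_sum[of "\<lambda>_. 1" "\<lambda>i. \<bar>x $ i\<bar>" "supp x"]
    by (simp add: power_mult_distrib)
  then show ?thesis
    by (rule power2_le_imp_le) simp
qed

lemma inner_matrix_vector_mult_le_max_column:
  fixes A :: "real^'n^'m"
  assumes "\<forall>i. \<bar>column i A \<bullet> y\<bar> \<le> G" and "sparse K x"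
  shows "(A *v x) \<bullet> y \<le> sqrt K * norm x * G"
proof -
  have G: "0 \<le> G"
    using assms by (meson abs_ge_zero order_trans)
  have "(A *v x) \<bullet> y \<le> (\<Sum>i\<in>supp x. \<bar>x $ i\<bar> * G)"
    unfolding inner_matrix_vector_mult_supp
  proof (rule sum_mono)
    fix i
    have "x $ i * (column i A \<bullet> y) \<le> \<bar>x $ i\<bar> * \<bar>column i A \<bullet> y\<bar>"
      by (metis abs_ge_self abs_mult)
    also have "\<dots> \<le> \<bar>x $ i\<bar> * G"
      using assms by (simp add: mult_left_mono)
    finally show "x $ i * (column i A \<bullet> y) \<le> \<bar>x $ i\<bar> * G" .
  qed
  also have "\<dots> \<le> sqrt (real (card (supp x))) * norm x * G"
    unfolding sum_distrib_right[symmetric] using sum_supp_abs_le G by (rule mult_right_mono)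
  also have "\<dots> \<le> sqrt K * norm x * G"
    using assms(2) G by (intro mult_right_mono) (simp_all add: sparse_def)
  finally show ?thesis .
qed

lemma omp_error_arith:
  fixes a r e d S :: real
  assumes a: "0 < a" and e: "0 \<le> e" and d: "0 \<le> d" "d < 1" and S: "0 \<le> S"
    and lower: "(1 - d) * r\<^sup>2 \<le> a\<^sup>2"
    and corr: "a\<^sup>2 - a * e \<le> S * r * (d * r + sqrt (1 + d) * e)"
  shows "a * (1 - (S + 1) * d) \<le> e * (S + 1) * (1 + d)"
proof -
  have "(sqrt (1 - d) * r)\<^sup>2 \<le> a\<^sup>2"
    using lower d by (simp add: power_mult_distrib)
  then have ra: "sqrt (1 - d) * r \<le> a"
    using a by (auto intro: power2_le_imp_le)
  have ra': "(1 - d) * r \<le> sqrt (1 - d) * a"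
  proof -
    have "(1 - d) * r = sqrt (1 - d) * (sqrt (1 - d) * r)"
      using d by (simp add: mult.assoc[symmetric])
    also have "\<dots> \<le> sqrt (1 - d) * a"
      using ra d by (intro mult_left_mono) simp_all
    finally show ?thesis .
  qed
  have sqrt_prod: "sqrt (1 + d) * sqrt (1 - d) \<le> 1 + d"
  proof -
    have "sqrt (1 + d) * sqrt (1 - d) = sqrt (1 - d\<^sup>2)"
      by (simp add: real_sqrt_mult[symmetric] algebra_simps power2_eq_square)
    also have "\<dots> \<le> 1"
      by simp
    finally show ?thesis
      using d by simp
  qed
  have "(1 - d) * (a\<^sup>2 - a * e) \<le> (1 - d) * (S * r * (d * r + sqrt (1 + d) * e))"
    using corr d by (simp add: mult_left_mono)
  also have "\<dots> = S * d * ((1 - d) * r\<^sup>2) + S * sqrt (1 + d) * e * ((1 - d) * r)"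
    by (simp add: algebra_simps power2_eq_square)
  also have "\<dots> \<le> S * d * a\<^sup>2 + S * sqrt (1 + d) * e * (sqrt (1 - d) * a)"
    using lower ra' S d e by (intro add_mono mult_left_mono) auto
  also have "\<dots> \<le> S * d * a\<^sup>2 + S * (1 + d) * e * a"
    using mult_left_mono[OF sqrt_prod, of "S * e * a"] S e a by (simp add: algebra_simps)
  finally have "a * ((1 - d) * (a - e)) \<le> a * (S * d * a + S * (1 + d) * e)"
    by (simp add: algebra_simps power2_eq_square)
  then have "(1 - d) * (a - e) \<le> S * d * a + S * (1 + d) * e"
    using a by simp
  then show ?thesis
    using mult_nonneg_nonneg[OF d(1) e] by (simp add: algebra_simps)
qed

lemma omp_wrong_index_error_bound:
  fixes \<Phi> :: "real^'n^'m" and x :: "real^'n" and v y :: "real^'m" and K :: nat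
  defines "\<delta> \<equiv> rip_const \<Phi> (Suc K)"
  assumes rip: "has_rip \<Phi> (Suc K)" and sparse: "sparse K x"
    and y: "y = \<Phi> *v x + v"
    and t: "\<forall>i. \<bar>column i \<Phi> \<bullet> y\<bar> \<le> \<bar>column t \<Phi> \<bullet> y\<bar>" and wrong: "t \<notin> supp x"
  shows "norm (\<Phi> *v x) * (1 - (sqrt K + 1) * \<delta>)
    \<le> norm v * (sqrt K + 1) * (1 + \<delta>)"
proof (cases "\<Phi> *v x = 0")
  case False
  have corr_signal: "\<bar>column t \<Phi> \<bullet> (\<Phi> *v x)\<bar> \<le> \<delta> * norm x"
    using rip_inner_column_outside_support[OF rip sparse] wrong by (simp add: supp_def \<delta>_def)
  have "\<bar>column t \<Phi> \<bullet> v\<bar> \<le> sqrt (1 + \<delta>) * norm v"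
    using Cauchy_Schwarz_ineq2[of "column t \<Phi>" v] norm_column_le_rip[OF rip, of t]
    by (simp add: \<delta>_def) (meson mult_right_mono norm_ge_zero order_trans)
  with corr_signal have corr: "\<bar>column t \<Phi> \<bullet> y\<bar> \<le> \<delta> * norm x + sqrt (1 + \<delta>) * norm v"
    unfolding y inner_add_right by linarith
  have "(norm (\<Phi> *v x))\<^sup>2 - norm (\<Phi> *v x) * norm v \<le> (\<Phi> *v x) \<bullet> y"
    using Cauchy_Schwarz_ineq2[of "\<Phi> *v x" v] by (simp add: y inner_add_right power2_norm_eq_inner)
  also have "\<dots> \<le> sqrt K * norm x * \<bar>column t \<Phi> \<bullet> y\<bar>"
    using t sparse by (rule inner_matrix_vector_mult_le_max_column)
  also have "\<dots> \<le> sqrt K * norm x * (\<delta> * norm x + sqrt (1 + \<delta>) * norm v)"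
    using corr by (intro mult_left_mono) simp_all
  finally have "(norm (\<Phi> *v x))\<^sup>2 - norm (\<Phi> *v x) * norm v
      \<le> sqrt K * norm x * (\<delta> * norm x + sqrt (1 + \<delta>) * norm v)" .
  moreover have "(1 - \<delta>) * (norm x)\<^sup>2 \<le> (norm (\<Phi> *v x))\<^sup>2"
    using rip_const_lower[OF rip] sparse by (simp add: sparse_def \<delta>_def)
  ultimately show ?thesis
    using omp_error_arith[of "norm (\<Phi> *v x)" "norm v" \<delta> "sqrt K" "norm x"] False
      rip_const_nonneg[OF rip] rip_const_less_one[OF rip]
    by (simp add: \<delta>_def mult.assoc)
qed (use rip_const_nonneg[OF rip] in \<open>simp add: \<delta>_def\<close>)

theorem mainTheorem5:
  fixes \<Phi> :: "real^'n^'m" and x :: "real^'n" and v y :: "real^'m" and K :: nat and t :: 'n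
  assumes K: "K \<ge> 1"
    and rip: "has_rip \<Phi> (K + 1)"
    and delta: "rip_const \<Phi> (K + 1) < 1 / (sqrt (real K) + 1)"
    and suppx: "card (supp x) = K"
    and y: "y = \<Phi> *v x + v"
    and snr: "v = 0 \<or>
      sqrt ((norm (\<Phi> *v x))\<^sup>2 / (norm v)\<^sup>2) >
        (sqrt (real K) + 1) * (1 + rip_const \<Phi> (K + 1))
          / (1 - (sqrt (real K) + 1) * rip_const \<Phi> (K + 1))"
    and t: "\<forall>i. \<bar>column i \<Phi> \<bullet> y\<bar> \<le> \<bar>column t \<Phi> \<bullet> y\<bar>"
  shows "t \<in> supp x"
proof (rule ccontr)
  assume wrong: "t \<notin> supp x"
  define \<delta> where "\<delta> = rip_const \<Phi> (K + 1)"
  define S where "S = sqrt (real K)"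
  have "0 < S + 1"
    by (simp add: S_def add_nonneg_pos)
  then have "\<delta> * (S + 1) < 1"
    using delta by (simp add: \<delta>_def S_def pos_less_divide_eq[symmetric])
  then have margin: "0 < 1 - (S + 1) * \<delta>"
    by (simp add: mult.commute)
  have "x \<noteq> 0"
    using suppx K by (auto simp: supp_def)
  then have "0 < (1 - \<delta>) * (norm x)\<^sup>2"
    using rip_const_less_one[OF rip] by (simp add: \<delta>_def)
  then have a: "0 < norm (\<Phi> *v x)"
    using rip_const_lower[OF rip, of x] suppx by (simp add: sparse_def \<delta>_def) fastforce
  have bound: "norm (\<Phi> *v x) * (1 - (S + 1) * \<delta>) \<le> norm v * ((S + 1) * (1 + \<delta>))"
    using omp_wrong_index_error_bound[of \<Phi> K x y v t] rip suppx y t wrong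
    by (simp add: sparse_def \<delta>_def S_def mult.assoc)
  show False
  proof (cases "v = 0")
    case True
    have "0 < norm (\<Phi> *v x) * (1 - (S + 1) * \<delta>)"
      using a margin by (rule mult_pos_pos)
    with bound True show False
      by simp
  next
    case False
    with snr have "(S + 1) * (1 + \<delta>) / (1 - (S + 1) * \<delta>) < norm (\<Phi> *v x) / norm v"
      by (simp add: \<delta>_def S_def real_sqrt_divide)
    with bound margin False show False
      by (simp add: field_simps)
  qed
qed

end
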